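(* Let $q>0$. For every $x\in\mathbb{R}$, $\mathcal{C}os_q x$ and $\mathcal{S}in_q x$ are real numbers and satisfy $-1\le \mathcal{C}os_q x\le 1$ and $-1\le \mathcal{S}in_q x\le1$.
   Context: For $q>0$ let $[k]=1+q+\dots+q^{k-1}$, $[n]!=[1]\cdots[n]$, and let $e_q^z=\sum_{n\ge0} z^n/[n]!$, $E_q^z=\sum_{n\ge0} q^{n(n-1)/2}z^n/[n]!$ be the standard $q$-exponentials, extended meromorphically to $\mathbb{C}$ (for $0<q<1$: $e_q^z=\prod_{k\ge0}(1-(1-q)q^kz)^{-1}$, $E_q^z=\prod_{k\ge0}(1+(1-q)q^kz)$; in general $E_q^z=e_{1/q}^z$; for $q=1$ both are $e^z$); their poles are real. The improved $q$-exponential is $\mathcal{E}_q^z:=e_q^{z/2}E_q^{z/2}$. For real $x$, $\mathcal{S}in_q x=\frac{\mathcal{E}_q^{ix}-\mathcal{E}_q^{-ix}}{2i}$ and $\mathcal{C}os_q x=\frac{\mathcal{E}_q^{ix}+\mathcal{E}_q^{-ix}}{2}$. *)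

theory Defs
  imports "HOL-Analysis.Analysis"
begin

definition qe_small :: "real \<Rightarrow> complex \<Rightarrow> complex" where
  "qe_small p z = inverse (\<Prod>k. 1 - complex_of_real ((1 - p) * p ^ k) * z)"

definition qE_small :: "real \<Rightarrow> complex \<Rightarrow> complex" where
  "qE_small p z = (\<Prod>k. 1 + complex_of_real ((1 - p) * p ^ k) * z)"

text \<open>General q > 0: E_q = e_{1/q} (hence e_q = E_{1/q}); q = 1 gives exp.\<close>

definition q_exp :: "real \<Rightarrow> complex \<Rightarrow> complex" where
  "q_exp q z = (if q = 1 then exp z else if q < 1 then qe_small q z else qE_small (1 / q) z)"

definition q_Exp :: "real \<Rightarrow> complex \<Rightarrow> complex" where
  "q_Exp q z = (if q = 1 then exp z else if q < 1 then qE_small q z else qe_small (1 / q) z)"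

definition q_Exp_improved :: "real \<Rightarrow> complex \<Rightarrow> complex" where
  "q_Exp_improved q z = q_exp q (z / 2) * q_Exp q (z / 2)"

definition q_Sin :: "real \<Rightarrow> real \<Rightarrow> complex" where
  "q_Sin q x = (q_Exp_improved q (\<i> * of_real x) - q_Exp_improved q (- \<i> * of_real x)) / (2 * \<i>)"

definition q_Cos :: "real \<Rightarrow> real \<Rightarrow> complex" where
  "q_Cos q x = (q_Exp_improved q (\<i> * of_real x) + q_Exp_improved q (- \<i> * of_real x)) / 2"

end

theory Submission
  imports Defs
begin

(* For 0 < p < 1 the product E_p^z = \<Prod>k (1 + (1-p) p^k z) converges
   absolutely for every complex z, has real coefficients and therefore commutes
   with complex conjugation, and it has no zeros in the half plane Re z \<ge> 0.
   The product defining e_p^z is by definition 1 / E_p^(-z).  Since E_q = e_(1/q)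
   for q > 1 and both functions are exp for q = 1, we obtain for every q > 0:
     (1) e_q and E_q commute with conjugation, hence so does the improved
         exponential, and
     (2) e_q^z E_q^(-z) = 1 on the imaginary axis.
   For w = \<E>_q^(ix) this gives \<E>_q^(-ix) = cnj w and
   |w|^2 = e(ix/2) E(-ix/2) \<cdot> e(-ix/2) E(ix/2) = 1, so Cos_q x = Re w and
   Sin_q x = Im w are real numbers of absolute value at most 1. *)

text \<open>The product defining E_p^z converges for every z, since its factors differ
  from 1 by a geometric sequence.\<close>

lemma qE_small_factors_convergent:
  fixes p :: real and z :: complex
  assumes "0 < p" "p < 1"
  shows "convergent_prod (\<lambda>k. 1 + complex_of_real ((1 - p) * p ^ k) * z)"
proof -
  have norm_factor: "norm ((1 + complex_of_real ((1 - p) * p ^ k) * z) - 1)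
      = ((1 - p) * norm z) * p ^ k" for k
  proof -
    have "norm (complex_of_real ((1 - p) * p ^ k)) = (1 - p) * p ^ k"
      using assms by (simp only: norm_of_real) simp
    then show ?thesis
      by (simp only: add_diff_cancel_left' norm_mult) simp
  qed
  have "summable (\<lambda>k. ((1 - p) * norm z) * p ^ k)"
    using assms by (intro summable_mult summable_geometric) auto
  then show ?thesis
    unfolding norm_factor[symmetric]
    by (intro abs_convergent_prod_imp_convergent_prod summable_imp_abs_convergent_prod)
qed

text \<open>Conjugation is continuous and multiplicative, so it commutes with
  convergent infinite products.\<close>

lemma prodinf_cnj:
  assumes "convergent_prod f" "convergent_prod (\<lambda>k. cnj (f k))"
  shows "(\<Prod>k. cnj (f k)) = cnj (\<Prod>k. f k)"
proof -
  have "(\<lambda>n. cnj (\<Prod>i\<le>n. f i)) \<longlonglongrightarrow> cnj (\<Prod>k. f k)"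
    by (intro tendsto_cnj convergent_prod_LIMSEQ assms)
  then have "(\<lambda>n. \<Prod>i\<le>n. cnj (f i)) \<longlonglongrightarrow> cnj (\<Prod>k. f k)"
    by (simp add: cnj_prod)
  moreover have "(\<lambda>n. \<Prod>i\<le>n. cnj (f i)) \<longlonglongrightarrow> (\<Prod>k. cnj (f k))"
    by (intro convergent_prod_LIMSEQ assms)
  ultimately show ?thesis
    using LIMSEQ_unique by blast
qed

text \<open>E_p has real Taylor coefficients: it commutes with conjugation.\<close>

lemma qE_small_cnj:
  assumes "0 < p" "p < 1"
  shows "qE_small p (cnj z) = cnj (qE_small p z)"
proof -
  have "qE_small p (cnj z) = (\<Prod>k. cnj (1 + complex_of_real ((1 - p) * p ^ k) * z))"
    unfolding qE_small_def by simp
  also have "\<dots> = cnj (qE_small p z)"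
    unfolding qE_small_def
    by (rule prodinf_cnj) (use qE_small_factors_convergent[OF assms] in simp_all)
  finally show ?thesis .
qed

lemma qe_small_eq_inverse_qE_small:
  "qe_small p z = inverse (qE_small p (- z))"
  unfolding qe_small_def qE_small_def by simp

lemma qe_small_cnj:
  assumes "0 < p" "p < 1"
  shows "qe_small p (cnj z) = cnj (qe_small p z)"
  using qE_small_cnj[OF assms, of "- z"]
  by (simp add: qe_small_eq_inverse_qE_small complex_cnj_inverse)

text \<open>All zeros of E_p lie on the negative real axis; in particular E_p has no
  zeros in the closed right half plane, where every factor has real part \<ge> 1.\<close>

lemma qE_small_nonzero:
  assumes "0 < p" "p < 1" "Re z \<ge> 0"
  shows "qE_small p z \<noteq> 0"
  unfolding qE_small_def
proof (rule prodinf_nonzero)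
  show "convergent_prod (\<lambda>k. 1 + complex_of_real ((1 - p) * p ^ k) * z)"
    using assms(1,2) by (rule qE_small_factors_convergent)
next
  fix k
  have "Re (1 + complex_of_real ((1 - p) * p ^ k) * z) \<ge> 1"
    using assms by simp
  then show "1 + complex_of_real ((1 - p) * p ^ k) * z \<noteq> 0"
    by (metis zero_complex.sel(1) not_one_le_zero)
qed

lemma qE_small_mult_qe_small_neg:
  assumes "0 < p" "p < 1" "Re z \<ge> 0"
  shows "qE_small p z * qe_small p (- z) = 1"
  using qE_small_nonzero[OF assms] by (simp add: qe_small_eq_inverse_qE_small)

lemma q_exp_cnj:
  assumes "q > 0"
  shows "q_exp q (cnj z) = cnj (q_exp q z)"
  using assms qe_small_cnj[of q] qE_small_cnj[of "1 / q"]
  by (simp add: q_exp_def exp_cnj)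

lemma q_Exp_cnj:
  assumes "q > 0"
  shows "q_Exp q (cnj z) = cnj (q_Exp q z)"
  using assms qE_small_cnj[of q] qe_small_cnj[of "1 / q"]
  by (simp add: q_Exp_def exp_cnj)

lemma q_Exp_improved_cnj:
  assumes "q > 0"
  shows "q_Exp_improved q (cnj z) = cnj (q_Exp_improved q z)"
  using q_exp_cnj[OF assms, of "z / 2"] q_Exp_cnj[OF assms, of "z / 2"]
  by (simp add: q_Exp_improved_def)

text \<open>The classical identity e_q^z E_q^(-z) = 1, valid (at least) on the
  imaginary axis, where neither side meets a pole.\<close>

lemma q_exp_mult_q_Exp_neg:
  assumes "q > 0" "Re z = 0"
  shows "q_exp q z * q_Exp q (- z) = 1"
proof -
  consider "q = 1" | "q < 1" | "q > 1"
    by linarith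
  then show ?thesis
  proof cases
    case 1
    then show ?thesis
      by (simp add: q_exp_def q_Exp_def exp_minus)
  next
    case 2
    then show ?thesis
      using qE_small_mult_qe_small_neg[of q "- z"] assms
      by (simp add: q_exp_def q_Exp_def mult.commute)
  next
    case 3
    then have "0 < 1 / q" "1 / q < 1"
      by auto
    then show ?thesis
      using qE_small_mult_qe_small_neg[of "1 / q" z] 3 assms
      by (simp add: q_exp_def q_Exp_def)
  qed
qed

lemma norm_q_Exp_improved_imaginary:
  assumes "q > 0" "Re z = 0"
  shows "norm (q_Exp_improved q z) = 1"
proof -
  let ?w = "z / 2"
  have cnj_w: "cnj ?w = - ?w"
    using assms(2) by (simp add: complex_eq_iff)
  have exp_neg: "q_exp q (- ?w) = cnj (q_exp q ?w)" "q_Exp q (- ?w) = cnj (q_Exp q ?w)"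
    using q_exp_cnj[OF assms(1), of ?w] q_Exp_cnj[OF assms(1), of ?w]
    by (simp_all only: cnj_w)
  have "complex_of_real ((norm (q_Exp_improved q z))\<^sup>2)
      = q_Exp_improved q z * cnj (q_Exp_improved q z)"
    by (simp add: complex_norm_square[symmetric])
  also have "\<dots> = (q_exp q ?w * q_Exp q (- ?w)) * (q_exp q (- ?w) * q_Exp q ?w)"
    by (simp add: q_Exp_improved_def exp_neg mult_ac)
  also have "\<dots> = 1"
    using assms q_exp_mult_q_Exp_neg[of q ?w] q_exp_mult_q_Exp_neg[of q "- ?w"] by simp
  finally have "(norm (q_Exp_improved q z))\<^sup>2 = 1"
    by (simp only: of_real_eq_1_iff)
  then show ?thesis
    using norm_ge_zero[of "q_Exp_improved q z"] by (auto simp add: power2_eq_1_iff)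
qed

theorem corollary4:
  fixes q x :: real
  assumes "q > 0"
  shows "q_Cos q x \<in> \<real> \<and> q_Sin q x \<in> \<real> \<and>
         -1 \<le> Re (q_Cos q x) \<and> Re (q_Cos q x) \<le> 1 \<and>
         -1 \<le> Re (q_Sin q x) \<and> Re (q_Sin q x) \<le> 1"
proof -
  define w where "w = q_Exp_improved q (\<i> * of_real x)"
  have norm_w: "norm w = 1"
    unfolding w_def using assms by (intro norm_q_Exp_improved_imaginary) auto
  have w_conj: "q_Exp_improved q (- \<i> * of_real x) = cnj w"
    unfolding w_def using q_Exp_improved_cnj[OF assms, of "\<i> * of_real x"] by simp
  have Cos_eq: "q_Cos q x = of_real (Re w)"
    unfolding q_Cos_def w_conj by (simp add: w_def[symmetric] complex_add_cnj)
  have Sin_eq: "q_Sin q x = of_real (Im w)"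
    unfolding q_Sin_def w_conj by (simp add: w_def[symmetric] complex_diff_cnj field_simps)
  have "\<bar>Re w\<bar> \<le> 1" "\<bar>Im w\<bar> \<le> 1"
    using abs_Re_le_cmod[of w] abs_Im_le_cmod[of w] norm_w by simp_all
  then show ?thesis
    unfolding Cos_eq Sin_eq by auto
qed

end
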